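(* Let $n\in\mathbb{N}$ and let $f,g\in H$ have as multiplier the same $n$-th root of unity, i.e. $f'(0)=g'(0)=\lambda$ with $\lambda^n=1$, and suppose $f^n\neq\mathrm{id}$. Then every $h\in G$ with $h^{-1}\circ f^n\circ h=g^n$ also satisfies $h^{-1}\circ f\circ h=g$.
   Context: $G$ denotes the group (under composition) of biholomorphic germs at $0$ in one complex variable: germs of functions holomorphic near $0$ with $f(0)=0$ and $f'(0)\neq 0$; $\mathrm{id}$ is the germ of the identity; powers $f^n$ are compositional iterates. $H=\{f\in G: f'(0)=\exp(i\pi q)\text{ for some } q\in\mathbb{Q}\}$. *)

theory Defs
  imports "HOL-Analysis.Analysis"
begin

text \<open>Germs at 0 are represented by functions complex \<Rightarrow> complex; two functions
  define the same germ iff they agree on a neighbourhood of 0.\<close>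

definition germ_eq :: "(complex \<Rightarrow> complex) \<Rightarrow> (complex \<Rightarrow> complex) \<Rightarrow> bool" where
  "germ_eq f g \<longleftrightarrow> (\<forall>\<^sub>F z in nhds 0. f z = g z)"

definition in_G :: "(complex \<Rightarrow> complex) \<Rightarrow> bool" where
  "in_G f \<longleftrightarrow> (\<exists>r>0. f holomorphic_on ball 0 r) \<and> f 0 = 0 \<and> deriv f 0 \<noteq> 0"

definition in_H :: "(complex \<Rightarrow> complex) \<Rightarrow> bool" where
  "in_H f \<longleftrightarrow> in_G f \<and> (\<exists>q \<in> \<rat>. deriv f 0 = exp (\<i> * of_real pi * of_real q))"

definition germ_inv :: "(complex \<Rightarrow> complex) \<Rightarrow> (complex \<Rightarrow> complex) \<Rightarrow> bool" where
  "germ_inv h k \<longleftrightarrow> in_G k \<and> germ_eq (k \<circ> h) id \<and> germ_eq (h \<circ> k) id"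

end

theory Submission
  imports Defs "HOL-Complex_Analysis.Complex_Analysis"
begin

text \<open>Conjugating by h reduces the claim to uniqueness of n-th roots: if \<phi> and \<psi> have the same
  multiplier \<lambda> with \<lambda>^n = 1 and \<phi>^n = \<psi>^n = G \<noteq> id, then \<phi> = \<psi>. Otherwise write
  \<phi> - \<psi> = \<delta> z^s + ... and G - id = \<alpha> z^m + ... with \<delta>, \<alpha> \<noteq> 0. Both \<phi> and \<psi> commute with G, so
  (\<phi> - \<psi>) \<circ> G - (\<phi> - \<psi>) = (G - id) \<circ> \<phi> - (G - id) \<circ> \<psi>; comparing the coefficients of
  z^(s+m-1) gives s = m \<lambda>^(m-1), and |\<lambda>| = 1 forces \<lambda>^s = \<lambda>. Telescoping then shows that the
  coefficient of z^s in \<phi>^n - \<psi>^n is n \<lambda>^(n-1) \<delta> \<noteq> 0, contradicting \<phi>^n = \<psi>^n.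
  Coefficients are read off as limits of u z / z^k at 0.\<close>

lemma eventually_at_if_nhds: "eventually P (nhds a) \<Longrightarrow> eventually P (at a within S)"
  unfolding eventually_at_filter by (erule eventually_mono) simp

lemma eventually_compose_analytic_at_0:
  fixes u :: "complex \<Rightarrow> complex"
  assumes "eventually P (nhds 0)" "u analytic_on {0}" "u 0 = 0"
  shows "eventually (\<lambda>z. P (u z)) (nhds 0)"
proof -
  have "filterlim u (nhds (u 0)) (nhds 0)"
    using analytic_at_imp_isCont[OF assms(2)] by (simp add: isCont_def tendsto_at_iff_tendsto_nhds)
  then show ?thesis using assms(1,3) eventually_compose_filterlim by fastforce
qed

lemma analytic_tendsto_0:
  fixes u :: "complex \<Rightarrow> complex"
  assumes "u analytic_on {0}" "u 0 = 0"
  shows "(u \<longlongrightarrow> 0) (at 0)"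
  using analytic_at_imp_isCont[OF assms(1)] assms(2) by (simp add: isCont_def)

lemma analytic_quotient_tendsto_deriv:
  fixes u :: "complex \<Rightarrow> complex"
  assumes "u analytic_on {0}" "u 0 = 0"
  shows "((\<lambda>z. u z / z) \<longlongrightarrow> deriv u 0) (at 0)"
proof -
  have "(u has_field_derivative deriv u 0) (at 0)"
    using assms(1) by (simp add: analytic_on_imp_differentiable_at DERIV_deriv_iff_field_differentiable)
  then show ?thesis using assms(2) by (simp add: has_field_derivative_iff)
qed

lemma power_factor_quotient_tendsto:
  fixes u \<delta> :: "complex \<Rightarrow> complex"
  assumes "eventually (\<lambda>z. u z = z ^ s * \<delta> z) (nhds 0)" "\<delta> analytic_on {0}"
  shows "((\<lambda>z. u z / z ^ s) \<longlongrightarrow> \<delta> 0) (at 0)"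
proof (rule Lim_transform_eventually)
  show "(\<delta> \<longlongrightarrow> \<delta> 0) (at 0)"
    using analytic_at_imp_isCont[OF assms(2)] by (simp add: isCont_def)
  show "\<forall>\<^sub>F z in at 0. \<delta> z = u z / z ^ s"
    using assms(1) unfolding eventually_at_filter by (rule eventually_mono) auto
qed

lemma funpow_analytic_at_0:
  fixes \<phi> :: "complex \<Rightarrow> complex"
  assumes "\<phi> analytic_on {0}" "\<phi> 0 = 0"
  shows "(\<phi> ^^ j) analytic_on {0}" "(\<phi> ^^ j) 0 = 0" "deriv (\<phi> ^^ j) 0 = deriv \<phi> 0 ^ j"
proof -
  have "(\<phi> ^^ j) analytic_on {0} \<and> (\<phi> ^^ j) 0 = 0 \<and> deriv (\<phi> ^^ j) 0 = deriv \<phi> 0 ^ j"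
  proof (induction j)
    case 0
    then show ?case by (simp add: id_def)
  next
    case (Suc j)
    then have "(\<phi> \<circ> \<phi> ^^ j) analytic_on {0}"
      using assms by (intro analytic_on_compose) auto
    moreover have "deriv (\<phi> \<circ> \<phi> ^^ j) 0 = deriv \<phi> ((\<phi> ^^ j) 0) * deriv (\<phi> ^^ j) 0"
      using Suc assms by (intro deriv_chain analytic_on_imp_differentiable_at[where S="{0}"]) auto
    ultimately show ?case using Suc assms by (simp add: o_def)
  qed
  then show "(\<phi> ^^ j) analytic_on {0}" "(\<phi> ^^ j) 0 = 0" "deriv (\<phi> ^^ j) 0 = deriv \<phi> 0 ^ j"
    by auto
qed

lemma analytic_zero_order_factor:
  fixes u :: "complex \<Rightarrow> complex"
  assumes u: "u analytic_on {0}" "u 0 = 0" and nonzero: "\<not> eventually (\<lambda>z. u z = 0) (nhds 0)"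
  obtains s \<delta> where "s > 0" "\<delta> analytic_on {0}" "\<delta> 0 \<noteq> 0"
    "eventually (\<lambda>z. u z = z ^ s * \<delta> z) (nhds 0)"
proof -
  obtain r0 where r0: "r0 > 0" "u holomorphic_on ball 0 r0"
    using u(1) by (metis analytic_at_ball)
  have "\<not> u constant_on ball 0 r0"
  proof
    assume "u constant_on ball 0 r0"
    then have "\<forall>z\<in>ball 0 r0. u z = 0" using r0(1) u(2) unfolding constant_on_def by force
    then have "eventually (\<lambda>z. u z = 0) (nhds 0)"
      using r0(1) unfolding eventually_nhds by (metis centre_in_ball open_ball)
    with nonzero show False by contradiction
  qed
  with r0 u(2) obtain g r s where gr: "0 < s" "0 < r" "g holomorphic_on ball 0 r"
      "\<And>w. w \<in> ball 0 r \<Longrightarrow> u w = (w - 0) ^ s * g w" "\<And>w. w \<in> ball 0 r \<Longrightarrow> g w \<noteq> 0"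
    by (metis holomorphic_factor_zero_nonconstant open_ball connected_ball centre_in_ball)
  have "g analytic_on {0}"
    using gr(2,3) by (metis analytic_at_ball)
  moreover have "eventually (\<lambda>z. u z = z ^ s * g z) (nhds 0)"
    using gr(2,4) unfolding eventually_nhds by (metis centre_in_ball open_ball diff_zero)
  ultimately show ?thesis using that gr(1,2,5) by simp
qed

lemma analytic_increment_bound:
  fixes F :: "complex \<Rightarrow> complex"
  assumes "F analytic_on {0}" "e > 0"
  obtains r where "r > 0"
    "\<And>x y. x \<in> ball 0 r \<Longrightarrow> y \<in> ball 0 r \<Longrightarrow>
       norm (F x - F y - deriv F 0 * (x - y)) \<le> e * norm (x - y)"
proof -
  obtain r2 where r2: "r2 > 0" "F holomorphic_on ball 0 r2"
    using assms(1) by (metis analytic_at_ball)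
  have "isCont (deriv F) 0"
    using assms(1) by (intro analytic_at_imp_isCont analytic_deriv)
  then obtain r1 where r1: "r1 > 0" "\<And>w. dist w 0 < r1 \<Longrightarrow> dist (deriv F w) (deriv F 0) < e"
    using assms(2) unfolding continuous_at_eps_delta by blast
  define r where "r = min r1 r2"
  have "norm ((\<lambda>w. F w - deriv F 0 * w) x - (\<lambda>w. F w - deriv F 0 * w) y) \<le> e * norm (x - y)"
    if "x \<in> ball 0 r" "y \<in> ball 0 r" for x y
  proof (rule field_differentiable_bound[OF convex_ball _ _ that])
    fix z :: complex assume z: "z \<in> ball 0 r"
    then have "(F has_field_derivative deriv F z) (at z within ball 0 r)"
      using r2(2) unfolding r_def
      by (metis holomorphic_derivI open_ball min.cobounded2 subset_ball in_mono)
    then show "((\<lambda>w. F w - deriv F 0 * w) has_field_derivative deriv F z - deriv F 0)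
        (at z within ball 0 r)"
      by (intro derivative_eq_intros) auto
    show "norm (deriv F z - deriv F 0) \<le> e"
      using r1(2)[of z] z unfolding r_def by (simp add: dist_norm)
  qed
  moreover have "r > 0" unfolding r_def using r1(1) r2(1) by simp
  ultimately show ?thesis by (intro that[of r]) (auto simp: algebra_simps)
qed

lemma analytic_difference_quotient_tendsto:
  fixes F p q :: "complex \<Rightarrow> complex"
  assumes F: "F analytic_on {0}" and p: "(p \<longlongrightarrow> 0) (at 0)" and q: "(q \<longlongrightarrow> 0) (at 0)"
    and pq: "((\<lambda>z. (p z - q z) / z ^ s) \<longlongrightarrow> d) (at 0)"
  shows "((\<lambda>z. (F (p z) - F (q z)) / z ^ s) \<longlongrightarrow> deriv F 0 * d) (at 0)"
proof -
  let ?c = "deriv F 0"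
  have "((\<lambda>z. (F (p z) - F (q z) - ?c * (p z - q z)) / z ^ s) \<longlongrightarrow> 0) (at 0)"
    unfolding tendsto_iff
  proof (intro allI impI)
    fix e :: real assume "e > 0"
    define \<epsilon> where "\<epsilon> = e / (2 * (norm d + 1))"
    have \<epsilon>: "\<epsilon> > 0" "\<epsilon> * (norm d + 1) < e"
      unfolding \<epsilon>_def using \<open>e > 0\<close> by (auto simp: field_simps add_pos_nonneg)
    obtain r where r: "r > 0" "\<And>x y. x \<in> ball 0 r \<Longrightarrow> y \<in> ball 0 r \<Longrightarrow>
        norm (F x - F y - ?c * (x - y)) \<le> \<epsilon> * norm (x - y)"
      using analytic_increment_bound[OF F \<epsilon>(1)] by blast
    have "\<forall>\<^sub>F z in at 0. dist (p z) 0 < r" "\<forall>\<^sub>F z in at 0. dist (q z) 0 < r"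
      using p q r(1) unfolding tendsto_iff by blast+
    moreover have "\<forall>\<^sub>F z in at 0. norm ((p z - q z) / z ^ s) \<le> norm d + 1"
      using order_tendstoD(2)[OF tendsto_norm[OF pq], of "norm d + 1"] by (auto elim: eventually_mono)
    ultimately show "\<forall>\<^sub>F z in at 0. dist ((F (p z) - F (q z) - ?c * (p z - q z)) / z ^ s) 0 < e"
    proof eventually_elim
      case (elim z)
      have "norm ((F (p z) - F (q z) - ?c * (p z - q z)) / z ^ s)
          \<le> \<epsilon> * norm (p z - q z) / norm (z ^ s)"
        using r(2)[of "p z" "q z"] elim(1,2) by (simp add: norm_divide divide_right_mono dist_commute)
      also have "\<dots> = \<epsilon> * norm ((p z - q z) / z ^ s)" by (simp add: norm_divide)
      also have "\<dots> \<le> \<epsilon> * (norm d + 1)" using elim(3) \<epsilon>(1) by (simp add: mult_left_mono)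
      finally show ?case using \<epsilon>(2) by simp
    qed
  qed
  then have "((\<lambda>z. (F (p z) - F (q z) - ?c * (p z - q z)) / z ^ s + ?c * ((p z - q z) / z ^ s))
      \<longlongrightarrow> 0 + ?c * d) (at 0)"
    by (intro tendsto_add tendsto_mult tendsto_const pq)
  then show ?thesis by (simp add: diff_divide_distrib right_diff_distrib)
qed

lemma tendsto_quotient_compose_tangent:
  fixes D r :: "complex \<Rightarrow> complex"
  assumes D: "((\<lambda>z. D z / z ^ s) \<longlongrightarrow> d) (at 0)"
    and r: "r analytic_on {0}" "r 0 = 0" "deriv r 0 \<noteq> 0"
  shows "((\<lambda>z. D (r z) / z ^ s) \<longlongrightarrow> d * deriv r 0 ^ s) (at 0)"
proof (rule Lim_transform_eventually)
  have quot: "((\<lambda>z. r z / z) \<longlongrightarrow> deriv r 0) (at 0)"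
    by (rule analytic_quotient_tendsto_deriv[OF r(1,2)])
  have nonzero: "\<forall>\<^sub>F z in at 0. r z / z \<noteq> 0"
    by (rule tendsto_imp_eventually_ne[OF quot r(3)])
  then have "filterlim r (at 0) (at 0)"
    by (intro filterlim_atI analytic_tendsto_0 r) (auto elim: eventually_mono)
  then have "((\<lambda>z. D (r z) / r z ^ s) \<longlongrightarrow> d) (at 0)"
    by (rule filterlim_compose[OF D])
  then show "((\<lambda>z. D (r z) / r z ^ s * (r z / z) ^ s) \<longlongrightarrow> d * deriv r 0 ^ s) (at 0)"
    by (intro tendsto_mult tendsto_power quot)
  show "\<forall>\<^sub>F z in at 0. D (r z) / r z ^ s * (r z / z) ^ s = D (r z) / z ^ s"
    using nonzero by eventually_elim (simp add: power_divide)
qed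

lemma power_diff_divide_power:
  fixes x y z :: "'a::field"
  assumes "z \<noteq> 0" "m > 0"
  shows "(x ^ m - y ^ m) / z ^ (s + m - 1)
       = (x - y) / z ^ s * (\<Sum>i<m. (y / z) ^ (m - Suc i) * (x / z) ^ i)"
proof -
  have "(\<Sum>i<m. (y / z) ^ (m - Suc i) * (x / z) ^ i) = (\<Sum>i<m. y ^ (m - Suc i) * x ^ i) / z ^ (m - 1)"
    unfolding sum_divide_distrib
  proof (rule sum.cong[OF refl])
    fix i assume "i \<in> {..<m}"
    then have "z ^ (m - 1) = z ^ (m - Suc i) * z ^ i" by (simp flip: power_add)
    then show "(y / z) ^ (m - Suc i) * (x / z) ^ i = y ^ (m - Suc i) * x ^ i / z ^ (m - 1)"
      by (simp add: power_divide)
  qed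
  moreover have "z ^ (s + m - 1) = z ^ s * z ^ (m - 1)"
    using assms(2) by (simp flip: power_add)
  ultimately show ?thesis by (simp add: power_diff_sumr2)
qed

lemma power_diff_quotient_tendsto:
  fixes p q :: "complex \<Rightarrow> complex"
  assumes p: "((\<lambda>z. p z / z) \<longlongrightarrow> l) (at 0)" and q: "((\<lambda>z. q z / z) \<longlongrightarrow> l) (at 0)"
    and pq: "((\<lambda>z. (p z - q z) / z ^ s) \<longlongrightarrow> d) (at 0)" and "m > 0"
  shows "((\<lambda>z. (p z ^ m - q z ^ m) / z ^ (s + m - 1)) \<longlongrightarrow> d * (of_nat m * l ^ (m - 1))) (at 0)"
proof (rule Lim_transform_eventually)
  have "((\<lambda>z. \<Sum>i<m. (q z / z) ^ (m - Suc i) * (p z / z) ^ i)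
      \<longlongrightarrow> (\<Sum>i<m. l ^ (m - Suc i) * l ^ i)) (at 0)"
    by (intro tendsto_sum tendsto_mult tendsto_power p q)
  also have "(\<Sum>i<m. l ^ (m - Suc i) * l ^ i) = of_nat m * l ^ (m - 1)"
    by (simp add: sum.cong[OF refl, of _ _ "\<lambda>_. l ^ (m - 1)"] flip: power_add)
  finally show "((\<lambda>z. (p z - q z) / z ^ s * (\<Sum>i<m. (q z / z) ^ (m - Suc i) * (p z / z) ^ i))
      \<longlongrightarrow> d * (of_nat m * l ^ (m - 1))) (at 0)"
    by (intro tendsto_mult pq)
  show "\<forall>\<^sub>F z in at 0. (p z - q z) / z ^ s * (\<Sum>i<m. (q z / z) ^ (m - Suc i) * (p z / z) ^ i)
      = (p z ^ m - q z ^ m) / z ^ (s + m - 1)"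
    unfolding eventually_at_filter
    by (intro always_eventually allI impI) (metis power_diff_divide_power[OF _ \<open>m > 0\<close>])
qed

lemma power_factor_diff_divide_power:
  fixes x y z a b :: "'a::field"
  assumes "z \<noteq> 0" "m > 0"
  shows "(x ^ m * a - y ^ m * b) / z ^ (s + m - 1)
       = (x ^ m - y ^ m) / z ^ (s + m - 1) * b + (x / z) ^ m * z * ((a - b) / z ^ s)"
proof -
  obtain k where k: "m = Suc k" using assms(2) gr0_implies_Suc by blast
  have "(x / z) ^ m * z * ((a - b) / z ^ s) = x ^ m * (a - b) / z ^ (s + m - 1)"
    using assms(1) by (simp add: k power_divide power_add)
  then show ?thesis by (simp add: diff_divide_distrib add_divide_distrib algebra_simps)
qed

lemma power_factor_diff_tendsto:
  fixes A \<alpha> p q :: "complex \<Rightarrow> complex"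
  assumes A: "eventually (\<lambda>z. A z = z ^ m * \<alpha> z) (nhds 0)" and \<alpha>: "\<alpha> analytic_on {0}"
    and p: "p analytic_on {0}" "p 0 = 0" "deriv p 0 = l"
    and q: "q analytic_on {0}" "q 0 = 0" "deriv q 0 = l"
    and pq: "((\<lambda>z. (p z - q z) / z ^ s) \<longlongrightarrow> d) (at 0)" and "m > 0"
  shows "((\<lambda>z. (A (p z) - A (q z)) / z ^ (s + m - 1)) \<longlongrightarrow> d * (of_nat m * l ^ (m - 1)) * \<alpha> 0) (at 0)"
proof (rule Lim_transform_eventually)
  have p_quot: "((\<lambda>z. p z / z) \<longlongrightarrow> l) (at 0)"
    using analytic_quotient_tendsto_deriv[OF p(1,2)] p(3) by simp
  have q_quot: "((\<lambda>z. q z / z) \<longlongrightarrow> l) (at 0)"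
    using analytic_quotient_tendsto_deriv[OF q(1,2)] q(3) by simp
  have "((\<lambda>z. (\<alpha> (p z) - \<alpha> (q z)) / z ^ s) \<longlongrightarrow> deriv \<alpha> 0 * d) (at 0)"
    by (intro analytic_difference_quotient_tendsto analytic_tendsto_0 \<alpha> p q pq)
  moreover have "((\<lambda>z. \<alpha> (q z)) \<longlongrightarrow> \<alpha> 0) (at 0)"
    by (intro isCont_tendsto_compose[OF analytic_at_imp_isCont[OF \<alpha>]] analytic_tendsto_0 q)
  ultimately have "((\<lambda>z. (p z ^ m - q z ^ m) / z ^ (s + m - 1) * \<alpha> (q z)
        + (p z / z) ^ m * z * ((\<alpha> (p z) - \<alpha> (q z)) / z ^ s))
      \<longlongrightarrow> d * (of_nat m * l ^ (m - 1)) * \<alpha> 0 + l ^ m * 0 * (deriv \<alpha> 0 * d)) (at 0)"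
    by (intro tendsto_intros power_diff_quotient_tendsto[OF p_quot q_quot pq \<open>m > 0\<close>] p_quot)
  then show "((\<lambda>z. (p z ^ m - q z ^ m) / z ^ (s + m - 1) * \<alpha> (q z)
        + (p z / z) ^ m * z * ((\<alpha> (p z) - \<alpha> (q z)) / z ^ s))
      \<longlongrightarrow> d * (of_nat m * l ^ (m - 1)) * \<alpha> 0) (at 0)"
    by simp
  have "\<forall>\<^sub>F z in at 0. A (p z) = p z ^ m * \<alpha> (p z)" "\<forall>\<^sub>F z in at 0. A (q z) = q z ^ m * \<alpha> (q z)"
    by (intro eventually_at_if_nhds eventually_compose_analytic_at_0[OF A] p(1,2) q(1,2))+
  moreover have "\<forall>\<^sub>F z in at 0. z \<noteq> 0" by (simp add: eventually_at_filter)
  ultimately show "\<forall>\<^sub>F z in at 0. (p z ^ m - q z ^ m) / z ^ (s + m - 1) * \<alpha> (q z)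
        + (p z / z) ^ m * z * ((\<alpha> (p z) - \<alpha> (q z)) / z ^ s)
      = (A (p z) - A (q z)) / z ^ (s + m - 1)"
  proof eventually_elim
    case (elim z)
    then show ?case by (simp only: power_factor_diff_divide_power[OF elim(3) \<open>m > 0\<close>])
  qed
qed

lemma funpow_diff_telescope:
  fixes \<phi> \<psi> :: "'a::ab_group_add \<Rightarrow> 'a"
  shows "(\<phi> ^^ n) z - (\<psi> ^^ n) z
       = (\<Sum>j<n. (\<psi> ^^ j) (\<phi> ((\<phi> ^^ (n - Suc j)) z)) - (\<psi> ^^ j) (\<psi> ((\<phi> ^^ (n - Suc j)) z)))"
proof -
  define t where "t j = (\<psi> ^^ j) ((\<phi> ^^ (n - j)) z)" for j
  have "(\<Sum>j<n. (\<psi> ^^ j) (\<phi> ((\<phi> ^^ (n - Suc j)) z)) - (\<psi> ^^ j) (\<psi> ((\<phi> ^^ (n - Suc j)) z)))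
      = (\<Sum>j<n. t j - t (Suc j))"
  proof (rule sum.cong[OF refl])
    fix j assume "j \<in> {..<n}"
    then have "n - j = Suc (n - Suc j)" by auto
    moreover have "(\<psi> ^^ Suc j) w = (\<psi> ^^ j) (\<psi> w)" for w
      by (simp only: funpow_Suc_right o_apply)
    ultimately show "(\<psi> ^^ j) (\<phi> ((\<phi> ^^ (n - Suc j)) z)) - (\<psi> ^^ j) (\<psi> ((\<phi> ^^ (n - Suc j)) z))
        = t j - t (Suc j)"
      unfolding t_def by simp
  qed
  also have "\<dots> = t 0 - t n" by (rule sum_lessThan_telescope')
  finally show ?thesis unfolding t_def by simp
qed

lemma funpow_diff_quotient_tendsto:
  fixes \<phi> \<psi> :: "complex \<Rightarrow> complex"
  assumes \<phi>: "\<phi> analytic_on {0}" "\<phi> 0 = 0" "deriv \<phi> 0 = l"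
    and \<psi>: "\<psi> analytic_on {0}" "\<psi> 0 = 0" "deriv \<psi> 0 = l"
    and "l \<noteq> 0" "l ^ s = l"
    and \<phi>\<psi>: "((\<lambda>z. (\<phi> z - \<psi> z) / z ^ s) \<longlongrightarrow> d) (at 0)"
  shows "((\<lambda>z. ((\<phi> ^^ n) z - (\<psi> ^^ n) z) / z ^ s) \<longlongrightarrow> of_nat n * l ^ (n - 1) * d) (at 0)"
proof -
  have summand: "((\<lambda>z. ((\<psi> ^^ j) (\<phi> ((\<phi> ^^ (n - Suc j)) z)) - (\<psi> ^^ j) (\<psi> ((\<phi> ^^ (n - Suc j)) z))) / z ^ s)
      \<longlongrightarrow> l ^ (n - 1) * d) (at 0)" if "j < n" for j
  proof -
    let ?r = "\<phi> ^^ (n - Suc j)"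
    have r: "?r analytic_on {0}" "?r 0 = 0" "deriv ?r 0 = l ^ (n - Suc j)"
      using funpow_analytic_at_0[OF \<phi>(1,2)] \<phi>(3) by auto
    have "(l ^ (n - Suc j)) ^ s = l ^ (n - Suc j)"
      using \<open>l ^ s = l\<close> by (metis power_mult mult.commute)
    then have r_diff: "((\<lambda>z. (\<phi> (?r z) - \<psi> (?r z)) / z ^ s) \<longlongrightarrow> d * l ^ (n - Suc j)) (at 0)"
      using tendsto_quotient_compose_tangent[OF \<phi>\<psi> r(1,2)] r(3) \<open>l \<noteq> 0\<close> by simp
    have \<phi>_r: "((\<lambda>z. \<phi> (?r z)) \<longlongrightarrow> 0) (at 0)"
      using isCont_tendsto_compose[OF analytic_at_imp_isCont[OF \<phi>(1)] analytic_tendsto_0[OF r(1,2)]] \<phi>(2)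
      by simp
    have \<psi>_r: "((\<lambda>z. \<psi> (?r z)) \<longlongrightarrow> 0) (at 0)"
      using isCont_tendsto_compose[OF analytic_at_imp_isCont[OF \<psi>(1)] analytic_tendsto_0[OF r(1,2)]] \<psi>(2)
      by simp
    have "((\<lambda>z. ((\<psi> ^^ j) (\<phi> (?r z)) - (\<psi> ^^ j) (\<psi> (?r z))) / z ^ s)
        \<longlongrightarrow> l ^ j * (d * l ^ (n - Suc j))) (at 0)"
      using analytic_difference_quotient_tendsto[OF funpow_analytic_at_0(1)[OF \<psi>(1,2)] \<phi>_r \<psi>_r r_diff]
        funpow_analytic_at_0(3)[OF \<psi>(1,2)] \<psi>(3) by simp
    moreover have "l ^ j * (d * l ^ (n - Suc j)) = l ^ (n - 1) * d"
      using that by (simp flip: power_add)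
    ultimately show ?thesis by simp
  qed
  have "((\<lambda>z. \<Sum>j<n. ((\<psi> ^^ j) (\<phi> ((\<phi> ^^ (n - Suc j)) z))
      - (\<psi> ^^ j) (\<psi> ((\<phi> ^^ (n - Suc j)) z))) / z ^ s) \<longlongrightarrow> (\<Sum>j<n. l ^ (n - 1) * d)) (at 0)"
    by (intro tendsto_sum summand) simp
  then show ?thesis
    by (simp add: funpow_diff_telescope sum_divide_distrib mult.assoc)
qed

lemma commuting_germs_order_relation:
  fixes \<phi> \<psi> G \<delta> \<alpha> :: "complex \<Rightarrow> complex"
  assumes \<phi>: "\<phi> analytic_on {0}" "\<phi> 0 = 0" "deriv \<phi> 0 = l"
    and \<psi>: "\<psi> analytic_on {0}" "\<psi> 0 = 0" "deriv \<psi> 0 = l"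
    and G: "G analytic_on {0}" "G 0 = 0" "deriv G 0 = 1"
    and commute: "eventually (\<lambda>z. \<phi> (G z) = G (\<phi> z)) (nhds 0)" "\<And>z. \<psi> (G z) = G (\<psi> z)"
    and \<delta>: "s > 0" "\<delta> analytic_on {0}" "\<delta> 0 \<noteq> 0" "eventually (\<lambda>z. \<phi> z - \<psi> z = z ^ s * \<delta> z) (nhds 0)"
    and \<alpha>: "m > 0" "\<alpha> analytic_on {0}" "\<alpha> 0 \<noteq> 0" "eventually (\<lambda>z. G z - z = z ^ m * \<alpha> z) (nhds 0)"
  shows "of_nat s = of_nat m * l ^ (m - 1)"
proof -
  have "((\<lambda>z. (G z - z) / z ^ m) \<longlongrightarrow> \<alpha> 0) (at 0)"
    by (rule power_factor_quotient_tendsto[OF \<alpha>(4,2)])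
  \<comment> \<open>the case p = G, q = id, with the roles of (s, \<delta>) and (m, \<alpha>) exchanged\<close>
  then have "((\<lambda>z. ((\<phi> (G z) - \<psi> (G z)) - (\<phi> z - \<psi> z)) / z ^ (m + s - 1))
      \<longlongrightarrow> \<alpha> 0 * (of_nat s * 1 ^ (s - 1)) * \<delta> 0) (at 0)"
    using power_factor_diff_tendsto[OF \<delta>(4,2) G, of "\<lambda>z. z"] \<delta>(1) by simp
  moreover have "\<forall>\<^sub>F z in at 0. ((\<phi> (G z) - \<psi> (G z)) - (\<phi> z - \<psi> z)) / z ^ (m + s - 1)
      = ((G (\<phi> z) - \<phi> z) - (G (\<psi> z) - \<psi> z)) / z ^ (s + m - 1)"
    using eventually_at_if_nhds[OF commute(1)] by eventually_elim (simp add: commute(2) add.commute)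
  ultimately have "((\<lambda>z. ((G (\<phi> z) - \<phi> z) - (G (\<psi> z) - \<psi> z)) / z ^ (s + m - 1))
      \<longlongrightarrow> \<alpha> 0 * of_nat s * \<delta> 0) (at 0)"
    by (simp add: tendsto_cong)
  moreover have "((\<lambda>z. ((G (\<phi> z) - \<phi> z) - (G (\<psi> z) - \<psi> z)) / z ^ (s + m - 1))
      \<longlongrightarrow> \<delta> 0 * (of_nat m * l ^ (m - 1)) * \<alpha> 0) (at 0)"
    using power_factor_diff_tendsto[OF \<alpha>(4,2) \<phi> \<psi> power_factor_quotient_tendsto[OF \<delta>(4,2)] \<alpha>(1)]
    by simp
  ultimately have "\<alpha> 0 * of_nat s * \<delta> 0 = \<delta> 0 * (of_nat m * l ^ (m - 1)) * \<alpha> 0"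
    by (rule tendsto_unique[OF at_neq_bot])
  then show ?thesis using \<alpha>(3) \<delta>(3) by (simp add: mult.commute mult.left_commute)
qed

lemma unimodular_power_eq_self:
  fixes l :: complex
  assumes "norm l = 1" "m > 0" "of_nat s = of_nat m * l ^ (m - 1)"
  shows "l ^ s = l"
proof -
  have "real s = real m" using arg_cong[OF assms(3), of norm] assms(1) by (simp add: norm_mult norm_power)
  then have "s = m" by simp
  then have "l ^ (s - 1) = 1" using assms(2,3) by simp
  then show ?thesis using \<open>s = m\<close> assms(2) by (cases s) auto
qed

lemma germ_eq_if_funpow_eq:
  fixes \<phi> \<psi> :: "complex \<Rightarrow> complex"
  assumes \<phi>: "\<phi> analytic_on {0}" "\<phi> 0 = 0" "deriv \<phi> 0 = l"
    and \<psi>: "\<psi> analytic_on {0}" "\<psi> 0 = 0" "deriv \<psi> 0 = l"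
    and "l ^ n = 1" and funpow_eq: "germ_eq (\<phi> ^^ n) (\<psi> ^^ n)" and "\<not> germ_eq (\<psi> ^^ n) id"
  shows "germ_eq \<phi> \<psi>"
proof (rule ccontr)
  assume "\<not> germ_eq \<phi> \<psi>"
  have "n > 0" using \<open>\<not> germ_eq (\<psi> ^^ n) id\<close> by (cases n) (auto simp: germ_eq_def)
  then have "norm l = 1" "l \<noteq> 0" using power_eq_1_iff[OF \<open>l ^ n = 1\<close>] by auto
  define G where "G = \<psi> ^^ n"
  have G: "G analytic_on {0}" "G 0 = 0" "deriv G 0 = 1"
    using funpow_analytic_at_0[OF \<psi>(1,2), of n] \<psi>(3) \<open>l ^ n = 1\<close> unfolding G_def by auto
  have "(\<lambda>z. \<phi> z - \<psi> z) analytic_on {0}" "\<not> eventually (\<lambda>z. \<phi> z - \<psi> z = 0) (nhds 0)"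
    using \<phi>(1) \<psi>(1) \<open>\<not> germ_eq \<phi> \<psi>\<close> by (auto simp: germ_eq_def analytic_on_diff)
  then obtain s \<delta> where \<delta>: "s > 0" "\<delta> analytic_on {0}" "\<delta> 0 \<noteq> 0"
    "eventually (\<lambda>z. \<phi> z - \<psi> z = z ^ s * \<delta> z) (nhds 0)"
    using \<phi>(2) \<psi>(2) by (auto elim: analytic_zero_order_factor)
  have "(\<lambda>z. G z - z) analytic_on {0}" "\<not> eventually (\<lambda>z. G z - z = 0) (nhds 0)"
    using G(1) \<open>\<not> germ_eq (\<psi> ^^ n) id\<close> by (auto simp: germ_eq_def G_def analytic_on_diff)
  then obtain m \<alpha> where \<alpha>: "m > 0" "\<alpha> analytic_on {0}" "\<alpha> 0 \<noteq> 0"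
    "eventually (\<lambda>z. G z - z = z ^ m * \<alpha> z) (nhds 0)"
    using G(2) by (auto elim: analytic_zero_order_factor)
  have "eventually (\<lambda>z. \<phi> (G z) = G (\<phi> z)) (nhds 0)"
    using funpow_eq eventually_compose_analytic_at_0[OF funpow_eq[unfolded germ_eq_def] \<phi>(1,2)]
    unfolding germ_eq_def
  proof eventually_elim
    case (elim z)
    then show ?case unfolding G_def by (metis funpow_swap1)
  qed
  moreover have "\<psi> (G z) = G (\<psi> z)" for z unfolding G_def by (rule funpow_swap1)
  ultimately have "of_nat s = of_nat m * l ^ (m - 1)"
    by (rule commuting_germs_order_relation[OF \<phi> \<psi> G _ _ \<delta> \<alpha>])
  then have "l ^ s = l" by (rule unimodular_power_eq_self[OF \<open>norm l = 1\<close> \<alpha>(1)])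
  then have "((\<lambda>z. ((\<phi> ^^ n) z - (\<psi> ^^ n) z) / z ^ s) \<longlongrightarrow> of_nat n * l ^ (n - 1) * \<delta> 0) (at 0)"
    by (intro funpow_diff_quotient_tendsto \<phi> \<psi> \<open>l \<noteq> 0\<close> power_factor_quotient_tendsto[OF \<delta>(4,2)])
  moreover have "((\<lambda>z. ((\<phi> ^^ n) z - (\<psi> ^^ n) z) / z ^ s) \<longlongrightarrow> 0) (at 0)"
    using eventually_at_if_nhds[OF funpow_eq[unfolded germ_eq_def], of UNIV]
    by (intro tendsto_eventually) (auto elim: eventually_mono)
  ultimately have "of_nat n * l ^ (n - 1) * \<delta> 0 = 0"
    by (rule tendsto_unique[OF at_neq_bot])
  then show False using \<open>n > 0\<close> \<open>l \<noteq> 0\<close> \<delta>(3) by simp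
qed

lemma in_G_analytic_at_0:
  assumes "in_G u"
  shows "u analytic_on {0}" "u 0 = 0" "deriv u 0 \<noteq> 0"
  using assms unfolding in_G_def by (auto simp: analytic_at_ball)

lemma conjugate_analytic_at_0:
  fixes f h k :: "complex \<Rightarrow> complex"
  assumes "in_G h" "germ_inv h k" "f analytic_on {0}" "f 0 = 0"
  shows "(k \<circ> f \<circ> h) analytic_on {0}" "(k \<circ> f \<circ> h) 0 = 0" "deriv (k \<circ> f \<circ> h) 0 = deriv f 0"
proof -
  have h: "h analytic_on {0}" "h 0 = 0" by (rule in_G_analytic_at_0[OF assms(1)])+
  have k: "k analytic_on {0}" "k 0 = 0"
    using assms(2) in_G_analytic_at_0 unfolding germ_inv_def by auto
  have diff: "u field_differentiable at 0" if "u analytic_on {0}" for u :: "complex \<Rightarrow> complex"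
    using that by (rule analytic_on_imp_differentiable_at) simp
  show "(k \<circ> f \<circ> h) analytic_on {0}" "(k \<circ> f \<circ> h) 0 = 0"
    using h k assms(3,4) by (auto intro!: analytic_on_compose)
  have "deriv k 0 * deriv h 0 = deriv (k \<circ> h) 0"
    using h k by (simp add: deriv_chain diff)
  also have "\<dots> = deriv id 0"
    using assms(2) unfolding germ_inv_def germ_eq_def by (intro deriv_cong_ev) auto
  finally have "deriv k 0 * deriv h 0 = 1" by simp
  moreover have "deriv (k \<circ> f \<circ> h) 0 = deriv k 0 * deriv f 0 * deriv h 0"
    using h k assms(3,4) by (simp add: deriv_chain diff analytic_on_compose)
  ultimately show "deriv (k \<circ> f \<circ> h) 0 = deriv f 0"
    by (metis mult.commute mult.left_commute mult_1_right)
qed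

lemma germ_eq_conjugate_funpow:
  fixes f h k :: "complex \<Rightarrow> complex"
  assumes "in_G h" "germ_inv h k" "f analytic_on {0}" "f 0 = 0"
  shows "germ_eq ((k \<circ> f \<circ> h) ^^ j) (k \<circ> (f ^^ j) \<circ> h)"
  unfolding germ_eq_def
proof (induction j)
  case 0
  show ?case using assms(2) unfolding germ_inv_def germ_eq_def by (auto elim: eventually_mono)
next
  case (Suc j)
  have "((f ^^ j) \<circ> h) analytic_on {0}" "((f ^^ j) \<circ> h) 0 = 0"
    using funpow_analytic_at_0[OF assms(3,4)] in_G_analytic_at_0[OF assms(1)]
    by (auto intro: analytic_on_compose)
  then have "\<forall>\<^sub>F z in nhds 0. h (k ((f ^^ j) (h z))) = (f ^^ j) (h z)"
    using eventually_compose_analytic_at_0[of "\<lambda>w. h (k w) = w" "(f ^^ j) \<circ> h"] assms(2)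
    unfolding germ_inv_def germ_eq_def by simp
  with Suc show ?case by eventually_elim simp
qed

lemma germ_eq_id_if_conjugate_id:
  fixes F h k :: "complex \<Rightarrow> complex"
  assumes "in_G h" "germ_inv h k" "F analytic_on {0}" "F 0 = 0" "germ_eq (k \<circ> F \<circ> h) id"
  shows "germ_eq F id"
proof -
  have hk: "\<forall>\<^sub>F z in nhds 0. h (k z) = z"
    using assms(2) unfolding germ_inv_def germ_eq_def by simp
  have "k analytic_on {0}" "k 0 = 0"
    using assms(2) in_G_analytic_at_0 unfolding germ_inv_def by auto
  then have "\<forall>\<^sub>F z in nhds 0. k (F (h (k z))) = k z"
    using eventually_compose_analytic_at_0[OF assms(5)[unfolded germ_eq_def]] by simp
  moreover have "\<forall>\<^sub>F z in nhds 0. h (k (F z)) = F z"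
    using eventually_compose_analytic_at_0[OF hk assms(3,4)] .
  ultimately show ?thesis
    using hk unfolding germ_eq_def by eventually_elim (metis id_apply)
qed

theorem corollary2p4:
  fixes n :: nat and f g :: "complex \<Rightarrow> complex" and lam :: complex
  assumes "in_H f" and "in_H g"
    and "deriv f 0 = lam" and "deriv g 0 = lam" and "lam ^ n = 1"
    and "\<not> germ_eq (f ^^ n) id"
  shows "\<forall>h hinv. in_G h \<longrightarrow> germ_inv h hinv \<longrightarrow>
           germ_eq (hinv \<circ> (f ^^ n) \<circ> h) (g ^^ n) \<longrightarrow>
           germ_eq (hinv \<circ> f \<circ> h) g"
proof (intro allI impI)
  fix h hinv
  assume h: "in_G h" "germ_inv h hinv" and conj: "germ_eq (hinv \<circ> (f ^^ n) \<circ> h) (g ^^ n)"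
  \<comment> \<open>only the in_G part of in_H is needed\<close>
  have f: "f analytic_on {0}" "f 0 = 0" and g: "g analytic_on {0}" "g 0 = 0"
    using assms(1,2) in_G_analytic_at_0 unfolding in_H_def by auto
  note \<phi> = conjugate_analytic_at_0[OF h f]
  have funpow_eq: "germ_eq ((hinv \<circ> f \<circ> h) ^^ n) (g ^^ n)"
    using germ_eq_conjugate_funpow[OF h f, of n] conj
    unfolding germ_eq_def by eventually_elim simp
  have not_id: "\<not> germ_eq (g ^^ n) id"
  proof
    assume "germ_eq (g ^^ n) id"
    then have "germ_eq (hinv \<circ> (f ^^ n) \<circ> h) id"
      using conj unfolding germ_eq_def by eventually_elim simp
    then have "germ_eq (f ^^ n) id"
      using germ_eq_id_if_conjugate_id[OF h] funpow_analytic_at_0[OF f] by blast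
    with assms(6) show False ..
  qed
  have "deriv (hinv \<circ> f \<circ> h) 0 = lam" using \<phi>(3) assms(3) by simp
  then show "germ_eq (hinv \<circ> f \<circ> h) g"
    by (rule germ_eq_if_funpow_eq[OF \<phi>(1,2) _ g assms(4,5) funpow_eq not_id])
qed

end
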